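(* Let $c>1$ be even and let $K$ be the set partition of $S_c$ whose only part with more than one element is the set of cyclic shifts of the identity, $\{12\cdots c,\ 23\cdots c1,\ \ldots,\ c12\cdots(c-1)\}$. Then the $K$-equivalence on $S_{c+1}$ has only one nontrivial class.
   Context: Permutations are written in one-line notation as words. The order permutation (standardization) of a word $u$ of distinct positive integers of length $\ell$ is the unique $\pi\in S_\ell$ with $\pi_i<\pi_j$ iff $u_i<u_j$. The $K$-equivalence on $S_n$ is the equivalence relation generated by declaring $\phi\equiv\psi$ whenever $\phi=aub$ and $\psi=avb$ for words $a,b,u,v$ with $u,v$ of length $c$ whose order permutations lie in the same part of $K$. A class is nontrivial if it contains more than one element. *)

theory Defs
  imports Main
begin

definition perms :: "nat \<Rightarrow> nat list set" where
  "perms n = {xs. distinct xs \<and> set xs = {1..n}}"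

definition std :: "nat list \<Rightarrow> nat list" where
  "std u = (THE p. p \<in> perms (length u) \<and>
     (\<forall>i<length u. \<forall>j<length u. (p ! i < p ! j \<longleftrightarrow> u ! i < u ! j)))"

definition Kstep :: "nat \<Rightarrow> nat list set set \<Rightarrow> nat \<Rightarrow> (nat list \<times> nat list) set" where
  "Kstep c K n = {(a @ u @ b, a @ v @ b) | a u v b.
      a @ u @ b \<in> perms n \<and> a @ v @ b \<in> perms n \<and>
      length u = c \<and> length v = c \<and> (\<exists>P\<in>K. std u \<in> P \<and> std v \<in> P)}"

definition Kequiv :: "nat \<Rightarrow> nat list set set \<Rightarrow> nat \<Rightarrow> (nat list \<times> nat list) set" where
  "Kequiv c K n = ((Kstep c K n) \<union> (Kstep c K n)\<inverse>)\<^sup>* \<inter> (perms n \<times> perms n)"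

definition cyc_shifts :: "nat \<Rightarrow> nat list set" where
  "cyc_shifts c = {rotate k [1..<c+1] | k. k < c}"

definition Kcyc :: "nat \<Rightarrow> nat list set set" where
  "Kcyc c = insert (cyc_shifts c) {{p} | p. p \<in> perms c \<and> p \<notin> cyc_shifts c}"

end

theory Submission
  imports Defs
begin

text \<open>A word of \<open>S\<^sub>c\<^sub>+\<^sub>1\<close> has exactly two factors of length \<open>c\<close>: its prefix and its suffix.
  A word neither of whose factors standardizes to a cyclic shift admits only trivial moves and is
  alone in its class. All other words are one move away from a cyclic shift
  \<open>R\<^sub>m = (m+1) \<dots> (c+1) 1 \<dots> m\<close> of the identity, since both factors of \<open>R\<^sub>m\<close> standardize to
  cyclic shifts. The word \<open>(m+1) (m+3) \<dots> (c+1) 1 \<dots> m (m+2)\<close> shares its first letter with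
  \<open>R\<^sub>m\<close> and its last letter with \<open>R\<^sub>m\<^sub>+\<^sub>2\<close>, again with cyclic factors, so \<open>R\<^sub>m\<close> and \<open>R\<^sub>m\<^sub>+\<^sub>2\<close>
  are equivalent. As \<open>R\<^sub>0 = R\<^sub>c\<^sub>+\<^sub>1\<close> is the identity and \<open>c + 1\<close> is odd, the chains through the
  even and the odd indices meet, so all words of the second kind form one class.\<close>

definition rank_in :: "nat set \<Rightarrow> nat \<Rightarrow> nat" where
  "rank_in S x = card {y \<in> S. y < x} + 1"

lemma rank_in_less:
  assumes "finite S" "x \<in> S" "x' \<in> S" "x < x'"
  shows "rank_in S x < rank_in S x'"
proof -
  have "{y \<in> S. y < x} \<subset> {y \<in> S. y < x'}" using assms by auto
  then have "card {y \<in> S. y < x} < card {y \<in> S. y < x'}"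
    using assms(1) by (intro psubset_card_mono) auto
  then show ?thesis unfolding rank_in_def by simp
qed

lemma rank_in_less_iff:
  "finite S \<Longrightarrow> x \<in> S \<Longrightarrow> x' \<in> S \<Longrightarrow> rank_in S x < rank_in S x' \<longleftrightarrow> x < x'"
  by (metis rank_in_less less_asym linorder_neqE_nat)

lemma inj_on_rank_in: "finite S \<Longrightarrow> inj_on (rank_in S) S"
  by (rule inj_onI) (metis linorder_neqE_nat rank_in_less less_irrefl)

lemma rank_in_image:
  assumes "finite S"
  shows "rank_in S ` S = {1..card S}"
proof (rule card_subset_eq)
  have "card {y \<in> S. y < x} < card S" if "x \<in> S" for x
    using assms that by (intro psubset_card_mono) auto
  then show "rank_in S ` S \<subseteq> {1..card S}" by (auto simp: rank_in_def Suc_le_eq)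
  show "card (rank_in S ` S) = card {1..card S}"
    using card_image[OF inj_on_rank_in[OF assms]] by simp
qed simp

lemma rank_in_nth:
  assumes "distinct xs" "i < length xs"
  shows "rank_in (set xs) (xs ! i) = card {j. j < length xs \<and> xs ! j < xs ! i} + 1"
proof -
  have "{y \<in> set xs. y < xs ! i} = (nth xs) ` {j. j < length xs \<and> xs ! j < xs ! i}"
    by (auto simp: set_conv_nth)
  moreover have "inj_on (nth xs) {j. j < length xs \<and> xs ! j < xs ! i}"
    using assms by (intro inj_on_nth) auto
  ultimately show ?thesis unfolding rank_in_def by (simp add: card_image)
qed

lemma rank_in_interval: "x \<in> {1..n} \<Longrightarrow> rank_in {1..n} x = x"
proof -
  assume "x \<in> {1..n}"
  then have "{y \<in> {1..n}. y < x} = {1..<x}" by auto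
  with \<open>x \<in> {1..n}\<close> show ?thesis unfolding rank_in_def by auto
qed

lemma std_eq_map_rank_in:
  assumes "distinct u"
  shows "std u = map (rank_in (set u)) u"
  unfolding std_def
proof (rule the_equality)
  have fin: "finite (set u)" by simp
  show "map (rank_in (set u)) u \<in> perms (length u) \<and>
    (\<forall>i<length u. \<forall>j<length u.
      (map (rank_in (set u)) u ! i < map (rank_in (set u)) u ! j) = (u ! i < u ! j))"
    using assms inj_on_rank_in[OF fin] rank_in_image[OF fin] rank_in_less_iff[OF fin]
    by (auto simp: perms_def distinct_map distinct_card)
next
  fix p assume p: "p \<in> perms (length u) \<and>
    (\<forall>i<length u. \<forall>j<length u. (p ! i < p ! j) = (u ! i < u ! j))"
  then have sp: "set p = {1..length u}" and dp: "distinct p" by (auto simp: perms_def)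
  have lp: "length p = length u" using distinct_card[OF dp] sp by simp
  show "p = map (rank_in (set u)) u"
  proof (rule nth_equalityI)
    show "length p = length (map (rank_in (set u)) u)" using lp by simp
    fix i assume "i < length p"
    then have i: "i < length u" using lp by simp
    have "p ! i = rank_in (set p) (p ! i)" using rank_in_interval sp i lp nth_mem by metis
    also have "\<dots> = card {j. j < length p \<and> p ! j < p ! i} + 1"
      using rank_in_nth[OF dp] i lp by simp
    also have "{j. j < length p \<and> p ! j < p ! i} = {j. j < length u \<and> u ! j < u ! i}"
      using p i lp by auto
    also have "card \<dots> + 1 = rank_in (set u) (u ! i)" using rank_in_nth[OF assms i] by simp
    finally show "p ! i = map (rank_in (set u)) u ! i" using i by simp
  qed
qed

lemma std_rotate: "distinct u \<Longrightarrow> std (rotate k u) = rotate k (std u)"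
  by (simp add: std_eq_map_rank_in rotate_map)

lemma std_sorted:
  assumes "sorted_wrt (<) s"
  shows "std s = [1..<length s + 1]"
proof -
  have d: "distinct s" and fin: "finite (set s)" using assms strict_sorted_iff by auto
  have "sorted_wrt (<) (map (rank_in (set s)) s)"
    unfolding sorted_wrt_map
    by (rule sorted_wrt_mono_rel[OF _ assms]) (use rank_in_less[OF fin] in auto)
  moreover have "set (map (rank_in (set s)) s) = set [1..<length s + 1]"
    using rank_in_image[OF fin] distinct_card[OF d] by auto
  ultimately show ?thesis using std_eq_map_rank_in[OF d]
    by (metis strict_sorted_iff sorted_distinct_set_unique sorted_upt distinct_upt)
qed

lemma std_inj:
  assumes "distinct u" "distinct v" "set u = set v" "std u = std v"
  shows "u = v"
proof -
  have "map (rank_in (set u)) u = map (rank_in (set u)) v"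
    using assms std_eq_map_rank_in by metis
  then show ?thesis by (rule map_inj_on) (use inj_on_rank_in assms(3) in auto)
qed

lemma std_swap_in_cyc_shifts:
  assumes "sorted_wrt (<) (p @ q)" "length (p @ q) = c" "c > 0"
  shows "std (q @ p) \<in> cyc_shifts c"
proof -
  have "std (q @ p) = rotate (length p) (std (p @ q))"
    using std_rotate[of "p @ q" "length p"] assms(1) by (simp add: strict_sorted_iff rotate_append)
  also have "\<dots> = rotate (length p mod c) [1..<c + 1]"
    using std_sorted[OF assms(1)] rotate_conv_mod[of "length p" "[1..<c + 1]"] assms(2)
    by (simp del: upt_Suc)
  finally show ?thesis using assms(3) unfolding cyc_shifts_def by auto
qed

lemma card_nontrivial_classes_eq_1:
  assumes "equiv A R" "z \<in> A" "\<And>x. x \<in> A \<Longrightarrow> (x, z) \<in> R \<or> R `` {x} = {x}"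
    and "card (R `` {z}) > 1"
  shows "card {C \<in> A // R. card C > 1} = 1"
proof -
  have "{C \<in> A // R. card C > 1} = {R `` {z}}"
  proof (intro equalityI subsetI)
    fix C assume "C \<in> {C \<in> A // R. card C > 1}"
    then obtain x where "x \<in> A" "C = R `` {x}" "card C > 1" by (auto elim: quotientE)
    then show "C \<in> {R `` {z}}" using assms(1,3) equiv_class_eq by fastforce
  qed (use assms(2,4) in \<open>auto intro: quotientI\<close>)
  then show ?thesis by simp
qed

lemma finite_perms: "finite (perms n)"
proof (rule finite_subset)
  show "perms n \<subseteq> {xs. set xs \<subseteq> {1..n} \<and> length xs = n}"
    unfolding perms_def using distinct_card by fastforce
qed (simp add: finite_lists_length_eq)

definition Kconn :: "nat \<Rightarrow> nat list set set \<Rightarrow> nat \<Rightarrow> (nat list \<times> nat list) set" where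
  "Kconn c K n = (Kstep c K n \<union> (Kstep c K n)\<inverse>)\<^sup>*"

lemma Kequiv_eq_Kconn: "Kequiv c K n = Kconn c K n \<inter> perms n \<times> perms n"
  by (simp add: Kequiv_def Kconn_def)

lemma sym_Kconn: "sym (Kconn c K n)"
  unfolding Kconn_def by (simp add: sym_rtrancl sym_Un_converse)

lemma trans_Kconn: "trans (Kconn c K n)"
  unfolding Kconn_def by (rule trans_rtrancl)

lemma equiv_Kequiv: "equiv (perms n) (Kequiv c K n)"
proof (rule equivI)
  show "refl_on (perms n) (Kequiv c K n)"
    by (auto simp: refl_on_def Kequiv_eq_Kconn Kconn_def)
  show "sym (Kequiv c K n)"
    using sym_Kconn[of c K n] by (auto simp: sym_def Kequiv_eq_Kconn)
  show "trans (Kequiv c K n)"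
    using trans_Kconn[of c K n] unfolding trans_def Kequiv_eq_Kconn by blast
qed (auto simp: Kequiv_eq_Kconn)

lemma Kconn_cyc_shifts:
  assumes "x @ u @ y \<in> perms n" "x @ v @ y \<in> perms n" "length u = c" "length v = c"
    and "std u \<in> cyc_shifts c" "std v \<in> cyc_shifts c"
  shows "(x @ u @ y, x @ v @ y) \<in> Kconn c (Kcyc c) n"
proof -
  have "(x @ u @ y, x @ v @ y) \<in> Kstep c (Kcyc c) n"
    using assms unfolding Kstep_def Kcyc_def by (intro CollectI) blast
  then show ?thesis unfolding Kconn_def by (intro r_into_rtrancl) blast
qed

definition has_cyc_factor :: "nat \<Rightarrow> nat list \<Rightarrow> bool" where
  "has_cyc_factor c w \<longleftrightarrow> (\<exists>x v y. w = x @ v @ y \<and> length v = c \<and> std v \<in> cyc_shifts c)"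

text \<open>Outside the part of cyclic shifts, a move replaces a factor by one with the same
  standardization and the same letters, that is, by itself.\<close>
lemma Kstep_Kcyc_trivial:
  assumes "(w, w') \<in> Kstep c (Kcyc c) n" "\<not> has_cyc_factor c w \<or> \<not> has_cyc_factor c w'"
  shows "w = w'"
proof -
  obtain x u v y P where w: "w = x @ u @ y" "w' = x @ v @ y"
    and perms: "x @ u @ y \<in> perms n" "x @ v @ y \<in> perms n"
    and len: "length u = c" "length v = c"
    and P: "P \<in> Kcyc c" "std u \<in> P" "std v \<in> P"
    using assms(1) unfolding Kstep_def by blast
  have "P \<noteq> cyc_shifts c"
    using assms(2) w len P unfolding has_cyc_factor_def by blast
  then obtain p where "P = {p}" using P(1) unfolding Kcyc_def by blast
  then have "std u = std v" using P by simp
  moreover have "distinct u" "distinct v" "set u = set v"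
    using perms unfolding perms_def by (auto simp: set_eq_iff)
  ultimately show ?thesis using std_inj w by blast
qed

lemma Kconn_Kcyc_isolated:
  assumes "(w, w') \<in> Kconn c (Kcyc c) n" "\<not> has_cyc_factor c w"
  shows "w' = w"
  using assms(1) unfolding Kconn_def
proof (induction rule: rtrancl_induct)
  case (step y z)
  then show ?case using assms(2) Kstep_Kcyc_trivial[of y z] Kstep_Kcyc_trivial[of z y] by auto
qed simp

lemma Kequiv_Kcyc_class_isolated:
  assumes "w \<in> perms n" "\<not> has_cyc_factor c w"
  shows "Kequiv c (Kcyc c) n `` {w} = {w}"
  using assms Kconn_Kcyc_isolated[of w _ c n] unfolding Kequiv_eq_Kconn by (auto simp: Kconn_def)

definition shift_id :: "nat \<Rightarrow> nat \<Rightarrow> nat list" where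
  "shift_id n m = [m + 1..<n + 1] @ [1..<m + 1]"

lemma shift_id_0: "shift_id (c + 1) 0 = [1..<c + 2]"
  by (simp add: shift_id_def)

lemma shift_id_self: "shift_id (c + 1) (c + 1) = [1..<c + 2]"
  by (simp add: shift_id_def)

lemma shift_id_in_perms: "m \<le> n \<Longrightarrow> shift_id n m \<in> perms n"
  by (auto simp: shift_id_def perms_def)

lemma Kconn_shift_id_add2:
  assumes "m + 2 \<le> c + 1"
  shows "(shift_id (c + 1) m, shift_id (c + 1) (m + 2)) \<in> Kconn c (Kcyc c) (c + 1)"
proof -
  define lo hi where "lo = [1..<m + 1]" and "hi = [m + 3..<c + 2]"
  have c: "c > 0" and len: "length lo = m" "length hi = c - m - 1"
    using assms unfolding lo_def hi_def by auto
  have sorted: "sorted_wrt (<) (lo @ [m + 1] @ hi)" "sorted_wrt (<) (lo @ [m + 2] @ hi)"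
    unfolding lo_def hi_def by (auto simp: sorted_wrt_append)
  have cyc: "std ([m + 1] @ hi @ lo) \<in> cyc_shifts c" "std ([m + 2] @ hi @ lo) \<in> cyc_shifts c"
    "std (hi @ lo @ [m + 1]) \<in> cyc_shifts c" "std (hi @ lo @ [m + 2]) \<in> cyc_shifts c"
    using std_swap_in_cyc_shifts[of lo "[m + 1] @ hi" c] std_swap_in_cyc_shifts[of lo "[m + 2] @ hi" c]
      std_swap_in_cyc_shifts[of "lo @ [m + 1]" hi c] std_swap_in_cyc_shifts[of "lo @ [m + 2]" hi c]
      sorted c len assms by auto
  have R: "shift_id (c + 1) m = [m + 1] @ ([m + 2] @ hi @ lo) @ []"
    "shift_id (c + 1) (m + 2) = [] @ (hi @ lo @ [m + 1]) @ [m + 2]"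
    using assms unfolding shift_id_def lo_def hi_def by (simp_all add: upt_conv_Cons numeral_3_eq_3)
  \<comment> \<open>the bridge word shares its first letter with \<open>R\<^sub>m\<close> and its last one with \<open>R\<^sub>m\<^sub>+\<^sub>2\<close>\<close>
  define t where "t = [m + 1] @ hi @ lo @ [m + 2]"
  have t: "t = [m + 1] @ (hi @ lo @ [m + 2]) @ []" "t = [] @ ([m + 1] @ hi @ lo) @ [m + 2]"
    unfolding t_def by simp_all
  have "t \<in> perms (c + 1)"
    using assms unfolding t_def perms_def lo_def hi_def by auto
  then have "(shift_id (c + 1) m, t) \<in> Kconn c (Kcyc c) (c + 1)"
      "(t, shift_id (c + 1) (m + 2)) \<in> Kconn c (Kcyc c) (c + 1)"
    using shift_id_in_perms[of m "c + 1"] shift_id_in_perms[of "m + 2" "c + 1"] assms len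
      Kconn_cyc_shifts[of "[m + 1]" "[m + 2] @ hi @ lo" "[]" "c + 1" "hi @ lo @ [m + 2]" c, OF _ _ _ _ cyc(2,4)]
      Kconn_cyc_shifts[of "[]" "[m + 1] @ hi @ lo" "[m + 2]" "c + 1" "hi @ lo @ [m + 1]" c, OF _ _ _ _ cyc(1,3)]
    unfolding R t by simp_all
  then show ?thesis using trans_Kconn by (metis transD)
qed

lemma Kconn_shift_id_add_even:
  "m + 2 * k \<le> c + 1 \<Longrightarrow>
    (shift_id (c + 1) m, shift_id (c + 1) (m + 2 * k)) \<in> Kconn c (Kcyc c) (c + 1)"
proof (induction k)
  case 0
  then show ?case by (simp add: Kconn_def)
next
  case (Suc k)
  then have "(shift_id (c + 1) m, shift_id (c + 1) (m + 2 * k)) \<in> Kconn c (Kcyc c) (c + 1)"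
    by simp
  moreover have "(shift_id (c + 1) (m + 2 * k), shift_id (c + 1) (m + 2 * Suc k))
      \<in> Kconn c (Kcyc c) (c + 1)"
    using Kconn_shift_id_add2[of "m + 2 * k" c] Suc.prems by (simp add: add.assoc)
  ultimately show ?case using trans_Kconn by (metis transD)
qed

text \<open>Here the parity of \<open>c\<close> enters: \<open>R\<^sub>0\<close> is reached from the even indices and \<open>R\<^sub>c\<^sub>+\<^sub>1\<close> from
  the odd ones, and both are the identity.\<close>
lemma Kconn_shift_id_identity:
  assumes "even c" "m \<le> c + 1"
  shows "(shift_id (c + 1) m, [1..<c + 2]) \<in> Kconn c (Kcyc c) (c + 1)"
proof (cases "even m")
  case True
  then obtain k where "m = 0 + 2 * k" by auto
  then have "(shift_id (c + 1) 0, shift_id (c + 1) m) \<in> Kconn c (Kcyc c) (c + 1)"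
    using Kconn_shift_id_add_even assms(2) by metis
  then show ?thesis using sym_Kconn shift_id_0 by (metis symD)
next
  case False
  have "even (c + 1 - m)" using assms False by simp
  then obtain k where "c + 1 - m = 2 * k" by (metis evenE)
  then have "c + 1 = m + 2 * k" using assms(2) by simp
  then show ?thesis using Kconn_shift_id_add_even[of m k c] shift_id_self[of c] by simp
qed

lemma Kconn_last_letter_shift_id:
  assumes "v @ [l] \<in> perms (c + 1)" "length v = c" "std v \<in> cyc_shifts c"
  shows "(v @ [l], shift_id (c + 1) l) \<in> Kconn c (Kcyc c) (c + 1)"
proof -
  have l: "1 \<le> l" "l \<le> c + 1" using assms(1) unfolding perms_def by auto
  have c: "c > 0" using assms(3) unfolding cyc_shifts_def by auto
  have R: "shift_id (c + 1) l = [] @ ([l + 1..<c + 2] @ [1..<l]) @ [l]"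
    using l unfolding shift_id_def by simp
  have "([] @ v @ [l], [] @ ([l + 1..<c + 2] @ [1..<l]) @ [l]) \<in> Kconn c (Kcyc c) (c + 1)"
  proof (rule Kconn_cyc_shifts)
    show "std ([l + 1..<c + 2] @ [1..<l]) \<in> cyc_shifts c"
      using l c by (intro std_swap_in_cyc_shifts) (auto simp: sorted_wrt_append)
    show "[] @ ([l + 1..<c + 2] @ [1..<l]) @ [l] \<in> perms (c + 1)"
      unfolding R[symmetric] using l(2) by (rule shift_id_in_perms)
  qed (use assms l in auto)
  then show ?thesis unfolding R by simp
qed

lemma Kconn_first_letter_shift_id:
  assumes "[f] @ v \<in> perms (c + 1)" "length v = c" "std v \<in> cyc_shifts c"
  shows "([f] @ v, shift_id (c + 1) (f - 1)) \<in> Kconn c (Kcyc c) (c + 1)"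
proof -
  have f: "1 \<le> f" "f \<le> c + 1" using assms(1) unfolding perms_def by auto
  have c: "c > 0" using assms(3) unfolding cyc_shifts_def by auto
  have R: "shift_id (c + 1) (f - 1) = [f] @ ([f + 1..<c + 2] @ [1..<f]) @ []"
    using f unfolding shift_id_def by (simp add: upt_conv_Cons)
  have "([f] @ v @ [], [f] @ ([f + 1..<c + 2] @ [1..<f]) @ []) \<in> Kconn c (Kcyc c) (c + 1)"
  proof (rule Kconn_cyc_shifts)
    show "std ([f + 1..<c + 2] @ [1..<f]) \<in> cyc_shifts c"
      using f c by (intro std_swap_in_cyc_shifts) (auto simp: sorted_wrt_append)
    show "[f] @ ([f + 1..<c + 2] @ [1..<f]) @ [] \<in> perms (c + 1)"
      unfolding R[symmetric] using f(2) by (intro shift_id_in_perms) simp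
  qed (use assms f in auto)
  then show ?thesis unfolding R by simp
qed

lemma Kconn_has_cyc_factor_identity:
  assumes "even c" "w \<in> perms (c + 1)" "has_cyc_factor c w"
  shows "(w, [1..<c + 2]) \<in> Kconn c (Kcyc c) (c + 1)"
proof -
  obtain x v y where w: "w = x @ v @ y" and v: "length v = c" "std v \<in> cyc_shifts c"
    using assms(3) unfolding has_cyc_factor_def by blast
  have "length w = c + 1" using assms(2) distinct_card unfolding perms_def by fastforce
  then have "length x + length y = 1" using w v by simp
  then consider l where "w = v @ [l]" | f where "w = [f] @ v"
    using w by (cases x; cases y) auto
  then obtain m where "m \<le> c + 1" "(w, shift_id (c + 1) m) \<in> Kconn c (Kcyc c) (c + 1)"
  proof cases
    case (1 l)
    have "l \<le> c + 1" using assms(2) unfolding 1 perms_def by auto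
    then show ?thesis
      using that Kconn_last_letter_shift_id[of v l c] assms(2) v unfolding 1 by blast
  next
    case (2 f)
    have "f \<in> set w" unfolding 2 by simp
    then have "f - 1 \<le> c + 1" using assms(2) unfolding perms_def by auto
    then show ?thesis
      using that Kconn_first_letter_shift_id[of f v c] assms(2) v unfolding 2 by blast
  qed
  then show ?thesis
    using Kconn_shift_id_identity[OF assms(1)] trans_Kconn by (metis transD)
qed

theorem corollary2p6:
  fixes c :: nat
  assumes "even c" and "c > 1"
  shows "card {C \<in> perms (c + 1) // Kequiv c (Kcyc c) (c + 1). card C > 1} = 1"
proof (rule card_nontrivial_classes_eq_1[OF equiv_Kequiv])
  let ?R = "Kequiv c (Kcyc c) (c + 1)"
  show id: "[1..<c + 2] \<in> perms (c + 1)" by (auto simp: perms_def)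
  show "(w, [1..<c + 2]) \<in> ?R \<or> ?R `` {w} = {w}" if "w \<in> perms (c + 1)" for w
    using that id Kconn_has_cyc_factor_identity[OF assms(1) that] Kequiv_Kcyc_class_isolated
    unfolding Kequiv_eq_Kconn by blast
  have "([1..<c + 2], shift_id (c + 1) 1) \<in> ?R"
    using Kconn_shift_id_identity[OF assms(1), of 1] sym_Kconn shift_id_in_perms[of 1] id assms(2)
    unfolding Kequiv_eq_Kconn by (auto dest: symD)
  then have "{[1..<c + 2], shift_id (c + 1) 1} \<subseteq> ?R `` {[1..<c + 2]}"
    using equiv_class_self[OF equiv_Kequiv id] by auto
  moreover have "finite (?R `` {[1..<c + 2]})"
    using finite_perms by (rule finite_subset[rotated]) (auto simp: Kequiv_eq_Kconn)
  ultimately have "card {[1..<c + 2], shift_id (c + 1) 1} \<le> card (?R `` {[1..<c + 2]})"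
    by (rule card_mono[rotated])
  moreover have "shift_id (c + 1) 1 \<noteq> [1..<c + 2]"
    using assms(2) by (simp add: shift_id_def upt_conv_Cons)
  ultimately show "card (?R `` {[1..<c + 2]}) > 1" by simp
qed

end
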